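(* Let $m\in\mathbb Z_{\ge0}$, $c\in\mathbb C$, and $D^c_{m+1}=z^2\frac{d}{dz}\left(\frac{1-z}{z}\right)\left(z\frac{d}{dz}+c-1\right)^m$. Then $D^c_{m+1}=\sum_{k=0}^{m+1}a^c_{m+1,k}(z)\frac{d^k}{dz^k}$ where each $a^c_{m+1,k}(z)\in\mathbb C[z]$ has the factorization $a^c_{m+1,k}(z)=(\alpha_{m+1,k}(c)z+\beta_{m+1,k}(c))z^k$ (so has degree at most $k+1$) with $\alpha_{m+1,k}(c),\beta_{m+1,k}(c)\in\mathbb Z[c]$, and the top coefficient is $a^c_{m+1,m+1}(z)=(1-z)z^{m+1}$, independent of $c$. *)

theory Defs
  imports "HOL-Computational_Algebra.Formal_Laurent_Series" "HOL-Computational_Algebra.Polynomial"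
begin

text \<open>Differential operators in the variable z are realised by their action on
  formal Laurent series over the complex numbers (z = fls_X, 1/z = fls_X_inv,
  d/dz = fls_deriv).\<close>

definition euler_op :: "complex \<Rightarrow> complex fls \<Rightarrow> complex fls" where
  "euler_op c g = fls_X * fls_deriv g + fls_const (c - 1) * g"

definition D_op :: "complex \<Rightarrow> nat \<Rightarrow> complex fls \<Rightarrow> complex fls" where
  "D_op c m f = fls_X ^ 2 * fls_deriv ((1 - fls_X) * fls_X_inv * ((euler_op c ^^ m) f))"

definition ipoly_eval :: "int poly \<Rightarrow> complex \<Rightarrow> complex" where
  "ipoly_eval p c = poly (map_poly of_int p) c"

end

theory Submission
  imports Defs
begin

text \<open>Write E for the operator z d/dz + c - 1. Since
  E(a z^k f^{(k)}) = (k + c - 1) a z^k f^{(k)} + a z^{k+1} f^{(k+1)}, the power E^m expands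
  as a sum of terms e_{m,k}(c) z^k d^k/dz^k whose coefficients are integer polynomials in c
  obeying a Pascal-type recursion with e_{m,m} = 1. On the other hand
  z^2 d/dz((1-z)/z g) = (1-z) E g + ((c-1)z - c) g, so
  D^c_{m+1} = (1-z) E^{m+1} + ((c-1)z - c) E^m, which yields
  alpha_k = (c-1) e_{m,k} - e_{m+1,k} and beta_k = e_{m+1,k} - c e_{m,k}; for k = m+1 these
  are -1 and 1.\<close>

lemma map_poly_of_int_add:
  "map_poly (of_int :: int \<Rightarrow> 'a :: comm_ring_1) (p + q) = map_poly of_int p + map_poly of_int q"
  by (rule poly_eqI) (simp add: coeff_map_poly)

lemma map_poly_of_int_diff:
  "map_poly (of_int :: int \<Rightarrow> 'a :: comm_ring_1) (p - q) = map_poly of_int p - map_poly of_int q"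
  by (rule poly_eqI) (simp add: coeff_map_poly)

lemma map_poly_of_int_mult:
  "map_poly (of_int :: int \<Rightarrow> 'a :: comm_ring_1) (p * q) = map_poly of_int p * map_poly of_int q"
  by (rule poly_eqI) (simp add: coeff_map_poly coeff_mult)

lemma ipoly_eval_0 [simp]: "ipoly_eval 0 c = 0"
  by (simp add: ipoly_eval_def)

lemma ipoly_eval_1 [simp]: "ipoly_eval 1 c = 1"
  by (simp add: ipoly_eval_def)

lemma ipoly_eval_pCons [simp]: "ipoly_eval (pCons a p) c = of_int a + c * ipoly_eval p c"
  by (simp add: ipoly_eval_def map_poly_pCons)

lemma ipoly_eval_add [simp]: "ipoly_eval (p + q) c = ipoly_eval p c + ipoly_eval q c"
  by (simp add: ipoly_eval_def map_poly_of_int_add)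

lemma ipoly_eval_diff [simp]: "ipoly_eval (p - q) c = ipoly_eval p c - ipoly_eval q c"
  by (simp add: ipoly_eval_def map_poly_of_int_diff)

lemma ipoly_eval_uminus [simp]: "ipoly_eval (- p) c = - ipoly_eval p c"
  using ipoly_eval_diff[of 0 p c] by simp

lemma ipoly_eval_mult [simp]: "ipoly_eval (p * q) c = ipoly_eval p c * ipoly_eval q c"
  by (simp add: ipoly_eval_def map_poly_of_int_mult)

lemma ipoly_eval_smult [simp]: "ipoly_eval (smult a p) c = of_int a * ipoly_eval p c"
  by (simp add: ipoly_eval_def map_poly_smult)

lemma euler_op_sum: "euler_op c (\<Sum>k\<in>S. f k) = (\<Sum>k\<in>S. euler_op c (f k))"
  by (simp add: euler_op_def fls_deriv_sum sum_distrib_left sum.distrib)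

lemma euler_op_monomial:
  "euler_op c (fls_const a * fls_X ^ k * g) =
     fls_const (a * (of_nat k + c - 1)) * fls_X ^ k * g + fls_const a * fls_X ^ Suc k * fls_deriv g"
proof -
  have X_deriv_X_power: "fls_X * fls_deriv (fls_X ^ k) = (of_nat k * fls_X ^ k :: complex fls)"
    unfolding fls_deriv_X_power by (cases k) (simp_all add: mult.left_commute)
  have "euler_op c (fls_const a * fls_X ^ k * g) =
      fls_const a * (fls_X * fls_deriv (fls_X ^ k)) * g + fls_const a * fls_X ^ Suc k * fls_deriv g
      + fls_const (c - 1) * fls_const a * fls_X ^ k * g"
    by (simp add: euler_op_def algebra_simps)
  also have "\<dots> = fls_const (a * (of_nat k + c - 1)) * fls_X ^ k * g
      + fls_const a * fls_X ^ Suc k * fls_deriv g"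
    unfolding X_deriv_X_power by (simp add: fls_of_nat algebra_simps flip: fls_plus_const fls_minus_const)
  finally show ?thesis .
qed

fun euler_coeff :: "nat \<Rightarrow> nat \<Rightarrow> int poly" where
  "euler_coeff 0 k = (if k = 0 then 1 else 0)"
| "euler_coeff (Suc m) k =
     [:int k - 1, 1:] * euler_coeff m k + (case k of 0 \<Rightarrow> 0 | Suc j \<Rightarrow> euler_coeff m j)"

lemma euler_coeff_eq_0: "m < k \<Longrightarrow> euler_coeff m k = 0"
  by (induction m arbitrary: k) (auto split: nat.split)

lemma euler_coeff_diag: "euler_coeff m m = 1"
  by (induction m) (simp_all add: euler_coeff_eq_0)

lemma ipoly_eval_euler_coeff_Suc:
  "ipoly_eval (euler_coeff (Suc m) k) c =
     ipoly_eval (euler_coeff m k) c * (of_nat k + c - 1)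
     + (case k of 0 \<Rightarrow> 0 | Suc j \<Rightarrow> ipoly_eval (euler_coeff m j) c)"
  by (cases k) (simp_all add: algebra_simps)

lemma euler_op_power_expansion:
  "(euler_op c ^^ m) f =
     (\<Sum>k\<le>m. fls_const (ipoly_eval (euler_coeff m k) c) * fls_X ^ k * (fls_deriv ^^ k) f)"
proof (induction m)
  case 0
  then show ?case by simp
next
  case (Suc m)
  define e where "e k = ipoly_eval (euler_coeff m k) c" for k
  define T where "T k = fls_X ^ k * (fls_deriv ^^ k) f" for k
  have "(euler_op c ^^ Suc m) f =
      (\<Sum>k\<le>m. fls_const (e k * (of_nat k + c - 1)) * T k) + (\<Sum>k\<le>m. fls_const (e k) * T (Suc k))"
    by (simp only: funpow.simps comp_apply Suc euler_op_sum euler_op_monomial)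
      (simp add: sum.distrib e_def T_def mult.assoc)
  also have "(\<Sum>k\<le>m. fls_const (e k * (of_nat k + c - 1)) * T k) =
      (\<Sum>k\<le>Suc m. fls_const (e k * (of_nat k + c - 1)) * T k)"
    by (simp add: e_def euler_coeff_eq_0)
  also have "(\<Sum>k\<le>m. fls_const (e k) * T (Suc k)) =
      (\<Sum>k\<le>Suc m. fls_const (case k of 0 \<Rightarrow> 0 | Suc j \<Rightarrow> e j) * T k)"
    by (subst sum.atMost_Suc_shift) simp
  also have "(\<Sum>k\<le>Suc m. fls_const (e k * (of_nat k + c - 1)) * T k)
      + (\<Sum>k\<le>Suc m. fls_const (case k of 0 \<Rightarrow> 0 | Suc j \<Rightarrow> e j) * T k)
      = (\<Sum>k\<le>Suc m. fls_const (ipoly_eval (euler_coeff (Suc m) k) c) * T k)"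
    unfolding ipoly_eval_euler_coeff_Suc e_def
    by (simp only: sum.distrib[symmetric] fls_plus_const[symmetric] distrib_right)
  finally show ?case by (simp add: T_def mult.assoc)
qed

lemma X_power2_deriv_one_minus_X_div_X:
  "fls_X ^ 2 * fls_deriv ((1 - fls_X) * fls_X_inv * g) =
     (1 - fls_X) * euler_op c g + (fls_const (c - 1) * fls_X - fls_const c) * g"
proof -
  define X :: "complex fls" where "X = fls_X"
  define Y :: "complex fls" where "Y = fls_X_inv"
  have XY: "X * Y = 1"
    by (simp add: X_def Y_def fls_X_inv_times_conv_shift)
  have X2Y: "X^2 * Y = X" and X2Y2: "X^2 * Y^2 = 1"
    by (simp_all add: power2_eq_square mult.assoc XY) (metis XY mult.assoc mult.left_commute mult_1_right)
  have "X^2 * fls_deriv ((1 - X) * Y * g) =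
      (1 - X) * (X^2 * Y) * fls_deriv g - (1 - X) * (X^2 * Y^2) * g - (X^2 * Y) * g"
    by (simp add: X_def Y_def algebra_simps)
  also have "\<dots> = (1 - X) * euler_op c g + (fls_const (c - 1) * X - fls_const c) * g"
    unfolding X2Y X2Y2 euler_op_def X_def[symmetric]
    by (simp add: algebra_simps flip: fls_minus_const)
  finally show ?thesis unfolding X_def Y_def .
qed

definition D_alpha :: "nat \<Rightarrow> nat \<Rightarrow> int poly" where
  "D_alpha m k = [:-1, 1:] * euler_coeff m k - euler_coeff (Suc m) k"

definition D_beta :: "nat \<Rightarrow> nat \<Rightarrow> int poly" where
  "D_beta m k = euler_coeff (Suc m) k - [:0, 1:] * euler_coeff m k"

lemma D_op_expansion:
  "D_op c m f =
     (\<Sum>k\<le>m+1. (fls_const (ipoly_eval (D_alpha m k) c) * fls_X + fls_const (ipoly_eval (D_beta m k) c))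
                 * fls_X ^ k * (fls_deriv ^^ k) f)"
proof -
  define e where "e n k = fls_const (ipoly_eval (euler_coeff n k) c)" for n k
  define T where "T k = fls_X ^ k * (fls_deriv ^^ k) f" for k
  have power_expansion: "(euler_op c ^^ n) f = (\<Sum>k\<le>m+1. e n k * T k)" if "n \<le> m + 1" for n
  proof -
    have "(\<Sum>k\<le>n. e n k * T k) = (\<Sum>k\<le>m+1. e n k * T k)"
      using that by (intro sum.mono_neutral_left) (auto simp: e_def euler_coeff_eq_0)
    then show ?thesis
      by (simp add: euler_op_power_expansion e_def T_def mult.assoc)
  qed
  have "D_op c m f = (1 - fls_X) * (euler_op c ^^ Suc m) f
      + (fls_const (c - 1) * fls_X - fls_const c) * (euler_op c ^^ m) f"
    by (simp only: D_op_def X_power2_deriv_one_minus_X_div_X funpow.simps comp_apply)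
  also have "\<dots> = (1 - fls_X) * (\<Sum>k\<le>m+1. e (Suc m) k * T k)
      + (fls_const (c - 1) * fls_X - fls_const c) * (\<Sum>k\<le>m+1. e m k * T k)"
    by (simp only: power_expansion le_add1 Suc_eq_plus1 order.refl)
  also have "\<dots> = (\<Sum>k\<le>m+1.
      ((1 - fls_X) * e (Suc m) k + (fls_const (c - 1) * fls_X - fls_const c) * e m k) * T k)"
    by (simp only: sum_distrib_left sum.distrib[symmetric] distrib_right mult.assoc)
  also have "\<dots> = (\<Sum>k\<le>m+1. (fls_const (ipoly_eval (D_alpha m k) c) * fls_X
      + fls_const (ipoly_eval (D_beta m k) c)) * fls_X ^ k * (fls_deriv ^^ k) f)"
    by (intro sum.cong refl)
      (simp add: D_alpha_def D_beta_def e_def T_def algebra_simps flip: fls_plus_const fls_minus_const)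
  finally show ?thesis .
qed

lemma D_alpha_top: "D_alpha m (Suc m) = -1"
  by (simp add: D_alpha_def euler_coeff_diag euler_coeff_eq_0)

lemma D_beta_top: "D_beta m (Suc m) = 1"
  by (simp add: D_beta_def euler_coeff_diag euler_coeff_eq_0)

theorem lemma8p2:
  fixes m :: nat
  shows "\<exists>\<alpha> \<beta> :: nat \<Rightarrow> int poly.
    (\<forall>(c::complex) (f::complex fls).
       D_op c m f =
       (\<Sum>k\<le>m+1. (fls_const (ipoly_eval (\<alpha> k) c) * fls_X + fls_const (ipoly_eval (\<beta> k) c))
                   * fls_X ^ k * ((fls_deriv ^^ k) f)))
    \<and> (\<forall>c::complex. (fls_const (ipoly_eval (\<alpha> (m+1)) c) * fls_X + fls_const (ipoly_eval (\<beta> (m+1)) c))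
                   * fls_X ^ (m+1) = (1 - fls_X) * fls_X ^ (m+1))"
proof (intro exI conjI allI)
  show "D_op c m f =
       (\<Sum>k\<le>m+1. (fls_const (ipoly_eval (D_alpha m k) c) * fls_X + fls_const (ipoly_eval (D_beta m k) c))
                   * fls_X ^ k * ((fls_deriv ^^ k) f))" for c f
    by (rule D_op_expansion)
  show "(fls_const (ipoly_eval (D_alpha m (m+1)) c) * fls_X + fls_const (ipoly_eval (D_beta m (m+1)) c))
          * fls_X ^ (m+1) = (1 - fls_X) * fls_X ^ (m+1)" for c :: complex
    by (simp add: D_alpha_top D_beta_top algebra_simps)
qed

end
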